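(* Let $T$ be a generalized tree-like graph with parameters $n_o\ge1$, $k_c$, $\hat k_b\ge1$ and $k=n_ok_c-(n_o-1)\hat k_b$ clients, and assume $k_c>\bar k_b$, where $\bar k_b=2\hat k_b$ if $n_o\ge3$, $\bar k_b=\hat k_b$ if $n_o=2$, $\bar k_b=0$ if $n_o=1$ (equivalently: every $o_i$ has a client neighbour adjacent to no other orchestrator vertex). Let $G_{er}$ be the enhanced ring graph on the $k$ clients obtained from $T$ by applying, for $i=1,\dots,n_o$, the rule $H\mapsto\tau_{o_i}(H)-o_i$. Let $T'$ be a generalized tree-like graph with parameters $n_o$, $k_c'=k_c-1$, $\hat k_b$ (hence with $k'=k-n_o$ clients and $k'+n_o=k$ vertices in total). Then there is a bijection between the vertex sets of $T'$ and $G_{er}$ under which $G_{er}$ is obtained from $T'$ by a sequence of local complementations (namely at the orchestrator vertices $o'_1,\dots,o'_{n_o}$ of $T'$). Consequently the graph state $\ket{G_{er}}$ is local-Clifford equivalent (up to relabelling of qubits) to the $k$-qubit generalized tree-like graph state $\ket{T'}$.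
   Context: All graphs are finite, simple and undirected. For $H=(V,E)$ and $a\in V$, $N_a=\{b:\{a,b\}\in E\}$; the local complementation $\tau_a(H)$ toggles the edge $\{b,c\}$ for every pair of distinct $b,c\in N_a$; $H-a$ deletes $a$ and its incident edges. Graph state $\ket{H}=\prod_{\{a,b\}\in E}\mathrm{CZ}_{ab}\ket{+}^{\otimes|V|}$. Two graph states are local-Clifford (LC) equivalent iff their graphs are related by a sequence of local complementations. Generalized tree-like graph with parameters $n_o\ge1$, $k_c$, $\hat k_b\ge1$: vertex set $\{o_1,\dots,o_{n_o}\}\cup V_c$ (disjoint) such that (i) every edge joins some $o_i$ to a client in $V_c$; (ii) $|N_{o_i}|=k_c$ for all $i$; (iii) $|N_{o_i}\cap N_{o_{i+1}}|=\hat k_b$ for $1\le i<n_o$; (iv) $N_{o_i}\cap N_{o_j}=\emptyset$ for $|i-j|\ge2$; (v) every client is adjacent to some $o_i$. Then $|V_c|=n_ok_c-(n_o-1)\hat k_b$. *)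

theory Defs
  imports Main
begin

definition simple_graph :: "'a set \<Rightarrow> 'a set set \<Rightarrow> bool" where
  "simple_graph V E \<longleftrightarrow> finite V \<and>
     (\<forall>e\<in>E. \<exists>a b. e = {a, b} \<and> a \<noteq> b \<and> a \<in> V \<and> b \<in> V)"

definition nbhd :: "'a set set \<Rightarrow> 'a \<Rightarrow> 'a set" where
  "nbhd E a = {b. {a, b} \<in> E}"

definition local_comp :: "'a set set \<Rightarrow> 'a \<Rightarrow> 'a set set" where
  "local_comp E a =
     (let X = {{b, c} | b c. b \<in> nbhd E a \<and> c \<in> nbhd E a \<and> b \<noteq> c}
      in (E - X) \<union> (X - E))"

definition local_comp_seq :: "'a set set \<Rightarrow> 'a list \<Rightarrow> 'a set set" where
  "local_comp_seq E as = fold (\<lambda>a H. local_comp H a) as E"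

definition lc_delete :: "'a \<Rightarrow> 'a set \<times> 'a set set \<Rightarrow> 'a set \<times> 'a set set" where
  "lc_delete a H = (fst H - {a}, {e \<in> local_comp (snd H) a. a \<notin> e})"

definition lc_delete_seq :: "'a list \<Rightarrow> 'a set \<times> 'a set set \<Rightarrow> 'a set \<times> 'a set set" where
  "lc_delete_seq as H = fold lc_delete as H"

text \<open>Generalized tree-like graph with orchestrators o 1, ..., o n_o and client set V - o`{1..n_o}.\<close>
definition gen_tree_like ::
  "'a set \<Rightarrow> 'a set set \<Rightarrow> (nat \<Rightarrow> 'a) \<Rightarrow> nat \<Rightarrow> nat \<Rightarrow> nat \<Rightarrow> bool" where
  "gen_tree_like V E orc n_o k_c kb \<longleftrightarrow>
     simple_graph V E \<and> n_o \<ge> 1 \<and> kb \<ge> 1 \<and>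
     inj_on orc {1..n_o} \<and> orc ` {1..n_o} \<subseteq> V \<and>
     (\<forall>e\<in>E. \<exists>i\<in>{1..n_o}. \<exists>c\<in>V - orc ` {1..n_o}. e = {orc i, c}) \<and>
     (\<forall>i\<in>{1..n_o}. card (nbhd E (orc i)) = k_c) \<and>
     (\<forall>i. 1 \<le> i \<and> i < n_o \<longrightarrow> card (nbhd E (orc i) \<inter> nbhd E (orc (Suc i))) = kb) \<and>
     (\<forall>i\<in>{1..n_o}. \<forall>j\<in>{1..n_o}. i + 2 \<le> j \<longrightarrow> nbhd E (orc i) \<inter> nbhd E (orc j) = {}) \<and>
     (\<forall>c\<in>V - orc ` {1..n_o}. \<exists>i\<in>{1..n_o}. c \<in> nbhd E (orc i))"

definition kbar :: "nat \<Rightarrow> nat \<Rightarrow> nat" where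
  "kbar n_o kb = (if n_o \<ge> 3 then 2 * kb else if n_o = 2 then kb else 0)"

definition enhanced_ring :: "'a set \<Rightarrow> 'a set set \<Rightarrow> (nat \<Rightarrow> 'a) \<Rightarrow> nat \<Rightarrow> 'a set \<times> 'a set set" where
  "enhanced_ring V E orc n_o = lc_delete_seq (map orc [1..<Suc n_o]) (V, E)"

end

theory Submission
  imports Defs
begin

text \<open>Eliminating the orchestrator o_i by the rule H \<mapsto> \<tau>_{o_i}(H) - o_i adds (modulo 2) the
  clique on its neighbourhood N_i to the client graph, so the enhanced ring graph is the symmetric
  difference of the cliques on N_1, ..., N_{n_o}. The hypothesis k_c > kbar leaves every N_i a
  private client p_i adjacent to no other orchestrator. Making p_i the centre of the star on
  N_i - {p_i} gives a generalized tree-like graph T' on the clients, with parameter k_c - 1. In T',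
  local complementation at p_i adds the clique on N_i - {p_i}, which together with the star at p_i
  is exactly the clique on N_i; so complementing at p_1, ..., p_{n_o} also produces the symmetric
  difference of the cliques on the N_i, and the identity on the clients is the required
  bijection.\<close>

definition clique_edges :: "'a set \<Rightarrow> 'a set set" where
  "clique_edges S = {{b, c} | b c. b \<in> S \<and> c \<in> S \<and> b \<noteq> c}"

definition star_edges :: "'a \<Rightarrow> 'a set \<Rightarrow> 'a set set" where
  "star_edges a S = {{a, c} | c. c \<in> S}"

lemma local_comp_eq_sym_diff: "local_comp E a = sym_diff E (clique_edges (nbhd E a))"
  unfolding local_comp_def clique_edges_def Let_def ..

lemma clique_edges_subset: "e \<in> clique_edges S \<Longrightarrow> e \<subseteq> S"
  unfolding clique_edges_def by auto

lemma clique_edges_insert: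
  "a \<notin> S \<Longrightarrow> clique_edges (insert a S) = clique_edges S \<union> star_edges a S"
  unfolding clique_edges_def star_edges_def by blast

lemma nbhd_Un: "nbhd (A \<union> B) a = nbhd A a \<union> nbhd B a"
  unfolding nbhd_def by blast

lemma lc_delete_eq:
  assumes "a \<notin> nbhd F a"
  shows "lc_delete a (W, F) = (W - {a}, sym_diff {e \<in> F. a \<notin> e} (clique_edges (nbhd F a)))"
  using assms clique_edges_subset
  unfolding lc_delete_def local_comp_eq_sym_diff by fastforce

primrec clique_sum :: "(nat \<Rightarrow> 'a set) \<Rightarrow> nat \<Rightarrow> 'a set set" where
  "clique_sum N 0 = {}"
| "clique_sum N (Suc m) = sym_diff (clique_sum N m) (clique_edges (N (Suc m)))"

lemma clique_sum_subset: "e \<in> clique_sum N m \<Longrightarrow> e \<subseteq> (\<Union>i\<in>{1..m}. N i)"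
proof (induction m arbitrary: e)
  case (Suc m)
  then consider "e \<subseteq> (\<Union>i\<in>{1..m}. N i)" | "e \<subseteq> N (Suc m)"
    by (auto dest: clique_edges_subset)
  then show ?case
  proof cases
    case 1
    moreover have "(\<Union>i\<in>{1..m}. N i) \<subseteq> (\<Union>i\<in>{1..Suc m}. N i)" by (rule UN_mono) auto
    ultimately show ?thesis by (rule subset_trans)
  next
    case 2
    moreover have "N (Suc m) \<subseteq> (\<Union>i\<in>{1..Suc m}. N i)" by (rule UN_upper) auto
    ultimately show ?thesis by (rule subset_trans)
  qed
qed simp

locale gen_tree_like_graph =
  fixes V :: "'a set" and E :: "'a set set" and orc :: "nat \<Rightarrow> 'a" and n k_c kb :: nat
  assumes gen_tree_like: "gen_tree_like V E orc n k_c kb"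
begin

definition clients :: "'a set" where
  "clients = V - orc ` {1..n}"

definition N :: "nat \<Rightarrow> 'a set" where
  "N i = nbhd E (orc i)"

lemma card_N: "i \<in> {1..n} \<Longrightarrow> card (N i) = k_c"
  using gen_tree_like by (simp add: gen_tree_like_def N_def)

lemma card_N_Int_N_Suc: "1 \<le> i \<Longrightarrow> i < n \<Longrightarrow> card (N i \<inter> N (Suc i)) = kb"
  using gen_tree_like by (simp add: gen_tree_like_def N_def)

lemma N_Int_N_eq_empty: "i \<in> {1..n} \<Longrightarrow> j \<in> {1..n} \<Longrightarrow> i + 2 \<le> j \<Longrightarrow> N i \<inter> N j = {}"
  using gen_tree_like by (simp add: gen_tree_like_def N_def)

lemma client_in_some_N: "c \<in> clients \<Longrightarrow> \<exists>i\<in>{1..n}. c \<in> N i"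
  using gen_tree_like by (simp add: gen_tree_like_def N_def clients_def)

lemma finite_clients: "finite clients"
  using gen_tree_like by (simp add: clients_def gen_tree_like_def simple_graph_def)

lemma edge_cases: "e \<in> E \<Longrightarrow> \<exists>i\<in>{1..n}. \<exists>c\<in>clients. e = {orc i, c}"
  using gen_tree_like unfolding gen_tree_like_def clients_def by blast

lemma orc_notin_clients: "i \<in> {1..n} \<Longrightarrow> orc i \<notin> clients"
  by (simp add: clients_def)

lemma orc_eq_iff: "i \<in> {1..n} \<Longrightarrow> j \<in> {1..n} \<Longrightarrow> orc i = orc j \<longleftrightarrow> i = j"
  using gen_tree_like unfolding gen_tree_like_def by (meson inj_on_eq_iff)

lemma edge_not_subset_clients: "e \<in> E \<Longrightarrow> \<not> e \<subseteq> clients"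
  using edge_cases orc_notin_clients by fastforce

lemma N_subset_clients: "i \<in> {1..n} \<Longrightarrow> N i \<subseteq> clients"
proof
  fix b assume i: "i \<in> {1..n}" and "b \<in> N i"
  then obtain j c where "c \<in> clients" "{orc i, b} = {orc j, c}"
    using edge_cases by (fastforce simp: N_def nbhd_def)
  then show "b \<in> clients" using orc_notin_clients[OF i] by (auto simp: doubleton_eq_iff)
qed

lemma finite_N: "i \<in> {1..n} \<Longrightarrow> finite (N i)"
  using N_subset_clients finite_clients by (rule finite_subset)

lemma clique_sum_subset_clients: "m \<le> n \<Longrightarrow> e \<in> clique_sum N m \<Longrightarrow> e \<subseteq> clients"
  using clique_sum_subset N_subset_clients by fastforce

lemma N_Int_subset_adjacent:
  assumes i: "i \<in> {1..n}" and j: "j \<in> {1..n}" and "j \<noteq> i"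
  shows "N i \<inter> N j \<subseteq>
    (if 1 < i then N (i - 1) \<inter> N i else {}) \<union> (if i < n then N i \<inter> N (Suc i) else {})"
proof -
  have "(j = i - 1 \<and> 1 < i) \<or> j = Suc i \<or> i + 2 \<le> j \<or> j + 2 \<le> i"
    using j \<open>j \<noteq> i\<close> by auto
  then consider "j = i - 1" "1 < i" | "j = Suc i" | "i + 2 \<le> j" | "j + 2 \<le> i"
    by blast
  then show ?thesis
  proof cases
    case 3
    then show ?thesis using N_Int_N_eq_empty[OF i j] by blast
  next
    case 4
    then show ?thesis using N_Int_N_eq_empty[OF j i] by blast
  qed (use j in auto)
qed

definition untouched_edges :: "nat \<Rightarrow> 'a set set" where
  "untouched_edges m = {e \<in> E. \<forall>j\<in>{1..m}. orc j \<notin> e}"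

lemma nbhd_untouched_edges:
  assumes "Suc m \<in> {1..n}"
  shows "nbhd (untouched_edges m) (orc (Suc m)) = N (Suc m)"
proof -
  have "orc j \<notin> {orc (Suc m), b}" if "j \<in> {1..m}" "{orc (Suc m), b} \<in> E" for j b
  proof -
    have "b \<in> N (Suc m)" using that(2) by (simp add: N_def nbhd_def)
    then have "b \<in> clients" using N_subset_clients[OF assms] by blast
    then show ?thesis
      using that(1) assms orc_eq_iff[of j "Suc m"] orc_notin_clients[of j] by auto
  qed
  then show ?thesis unfolding untouched_edges_def nbhd_def N_def by blast
qed

lemma lc_delete_seq_orc:
  "m \<le> n \<Longrightarrow> lc_delete_seq (map orc [1..<Suc m]) (V, E) =
     (V - orc ` {1..m}, untouched_edges m \<union> clique_sum N m)"
proof (induction m)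
  case 0
  then show ?case by (simp add: lc_delete_seq_def untouched_edges_def)
next
  case (Suc m)
  let ?a = "orc (Suc m)" and ?F = "untouched_edges m \<union> clique_sum N m"
  have m: "Suc m \<in> {1..n}" using Suc.prems by simp
  have a: "?a \<notin> clients" using m by (rule orc_notin_clients)
  have sum_in_clients: "e \<subseteq> clients" if "e \<in> clique_sum N m" for e
    using that clique_sum_subset_clients[of m e] Suc.prems by simp
  have nbhd_F: "nbhd ?F ?a = N (Suc m)"
    using nbhd_untouched_edges[OF m] sum_in_clients a by (auto simp: nbhd_Un nbhd_def)
  have clique_in_clients: "e \<subseteq> clients" if "e \<in> clique_edges (N (Suc m))" for e
    using clique_edges_subset[OF that] N_subset_clients[OF m] by blast
  have "{e \<in> ?F. ?a \<notin> e} = untouched_edges (Suc m) \<union> clique_sum N m"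
    using sum_in_clients a by (auto simp: untouched_edges_def atLeastAtMostSuc_conv)
  moreover have "untouched_edges (Suc m) \<inter> clique_edges (N (Suc m)) = {}"
    using clique_in_clients edge_not_subset_clients unfolding untouched_edges_def by blast
  ultimately have edges: "sym_diff {e \<in> ?F. ?a \<notin> e} (clique_edges (N (Suc m))) =
      untouched_edges (Suc m) \<union> clique_sum N (Suc m)"
    by auto
  have vertices: "V - orc ` {1..m} - {?a} = V - orc ` {1..Suc m}"
    by (auto simp: atLeastAtMostSuc_conv)
  have loopfree: "?a \<notin> nbhd ?F ?a"
    using nbhd_F N_subset_clients[OF m] a by blast
  have "lc_delete ?a (V - orc ` {1..m}, ?F) =
      (V - orc ` {1..Suc m}, untouched_edges (Suc m) \<union> clique_sum N (Suc m))"
    unfolding lc_delete_eq[OF loopfree] nbhd_F edges vertices ..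
  then show ?case using Suc by (simp add: lc_delete_seq_def)
qed

lemma enhanced_ring_eq: "enhanced_ring V E orc n = (clients, clique_sum N n)"
proof -
  have "untouched_edges n = {}"
    using edge_cases by (fastforce simp: untouched_edges_def)
  then show ?thesis
    unfolding enhanced_ring_def lc_delete_seq_orc[OF order_refl] clients_def by simp
qed

end

locale gen_tree_like_private = gen_tree_like_graph +
  assumes kc_gt_kbar: "k_c > kbar n kb"
begin

lemma private_client_exists:
  assumes i: "i \<in> {1..n}"
  shows "\<exists>x. x \<in> N i \<and> (\<forall>j\<in>{1..n}. j \<noteq> i \<longrightarrow> x \<notin> N j)"
proof -
  define B1 where "B1 = (if 1 < i then N (i - 1) \<inter> N i else {})"
  define B2 where "B2 = (if i < n then N i \<inter> N (Suc i) else {})"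
  have "card (B1 \<union> B2) \<le> card B1 + card B2"
    by (rule card_Un_le)
  also have "\<dots> \<le> kbar n kb"
    using i card_N_Int_N_Suc[of "i - 1"] card_N_Int_N_Suc[of i] by (auto simp: B1_def B2_def kbar_def)
  also have "\<dots> < card (N i)"
    using card_N[OF i] kc_gt_kbar by simp
  finally have "card (B1 \<union> B2) < card (N i)" .
  moreover have "finite (B1 \<union> B2)"
    using finite_N[OF i] by (simp add: B1_def B2_def)
  ultimately have "\<not> N i \<subseteq> B1 \<union> B2"
    using card_mono[of "B1 \<union> B2" "N i"] by linarith
  then obtain x where x: "x \<in> N i" "x \<notin> B1 \<union> B2" by blast
  moreover have "x \<notin> N j" if "j \<in> {1..n}" "j \<noteq> i" for j
    using N_Int_subset_adjacent[OF i that, folded B1_def B2_def] x by blast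
  ultimately show ?thesis by blast
qed

definition priv :: "nat \<Rightarrow> 'a" where
  "priv i = (SOME x. x \<in> N i \<and> (\<forall>j\<in>{1..n}. j \<noteq> i \<longrightarrow> x \<notin> N j))"

lemma priv_in_N_iff:
  assumes "i \<in> {1..n}" and "j \<in> {1..n}"
  shows "priv j \<in> N i \<longleftrightarrow> i = j"
proof -
  have "priv j \<in> N j \<and> (\<forall>k\<in>{1..n}. k \<noteq> j \<longrightarrow> priv j \<notin> N k)"
    unfolding priv_def by (rule someI_ex[OF private_client_exists[OF assms(2)]])
  then show ?thesis using assms(1) by blast
qed

lemma priv_in_clients: "i \<in> {1..n} \<Longrightarrow> priv i \<in> clients"
  using priv_in_N_iff[of i i] N_subset_clients by blast

lemma priv_eq_iff: "i \<in> {1..n} \<Longrightarrow> j \<in> {1..n} \<Longrightarrow> priv i = priv j \<longleftrightarrow> i = j"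
  using priv_in_N_iff[of i i] priv_in_N_iff[of i j] by auto

text \<open>The edge set of T' is tree_edges 0; tree_edges m keeps only the stars at the p_i with
  i > m, which have not been complemented yet.\<close>
definition tree_edges :: "nat \<Rightarrow> 'a set set" where
  "tree_edges m = (\<Union>i\<in>{m<..n}. star_edges (priv i) (N i - {priv i}))"

lemma tree_edges_Suc:
  assumes "m < n"
  shows "tree_edges m = star_edges (priv (Suc m)) (N (Suc m) - {priv (Suc m)}) \<union> tree_edges (Suc m)"
proof -
  have "{m<..n} = insert (Suc m) {Suc m<..n}" using assms by auto
  then show ?thesis unfolding tree_edges_def by simp
qed

lemma nbhd_tree_edges:
  assumes "m < i" "i \<le> n"
  shows "nbhd (tree_edges m) (priv i) = N i - {priv i}"
proof -
  have i: "i \<in> {1..n}" using assms by simp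
  have "{priv i, b} = {priv j, c} \<longleftrightarrow> j = i \<and> c = b"
    if j: "j \<in> {m<..n}" and c: "c \<in> N j - {priv j}" for j b c
  proof -
    have j': "j \<in> {1..n}" using j by simp
    have "priv i \<noteq> c" using c priv_in_N_iff[OF j' i] by auto
    then show ?thesis using priv_eq_iff[OF i j'] by (auto simp: doubleton_eq_iff)
  qed
  then show ?thesis
    using assms unfolding nbhd_def tree_edges_def star_edges_def by fastforce
qed

lemma local_comp_seq_priv:
  "m \<le> n \<Longrightarrow> local_comp_seq (tree_edges 0) (map priv [1..<Suc m]) = tree_edges m \<union> clique_sum N m"
proof (induction m)
  case 0
  then show ?case by (simp add: local_comp_seq_def)
next
  case (Suc m)
  let ?a = "priv (Suc m)"
  define S where "S = N (Suc m) - {?a}"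
  have m: "Suc m \<in> {1..n}" using Suc.prems by simp
  have a_notin_sum: "?a \<notin> e" if "e \<in> clique_sum N m" for e
    using clique_sum_subset[OF that] priv_in_N_iff[of _ "Suc m"] Suc.prems by fastforce
  have nbhd_a: "nbhd (tree_edges m \<union> clique_sum N m) ?a = S"
    using nbhd_tree_edges[of m "Suc m"] Suc.prems a_notin_sum by (auto simp: nbhd_Un nbhd_def S_def)
  have N_eq: "N (Suc m) = insert ?a S"
    using priv_in_N_iff[OF m m] by (auto simp: S_def)
  have "tree_edges (Suc m) \<inter> clique_edges S = {}"
  proof -
    have "priv j \<notin> S" if "j \<in> {Suc m<..n}" for j
      using that priv_in_N_iff[OF m, of j] by (simp add: S_def)
    then show ?thesis
      unfolding tree_edges_def star_edges_def by (blast dest: clique_edges_subset)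
  qed
  moreover have "star_edges ?a S \<inter> clique_edges S = {}"
    unfolding star_edges_def S_def by (blast dest: clique_edges_subset)
  moreover have "star_edges ?a S \<inter> clique_sum N m = {}"
    using a_notin_sum unfolding star_edges_def by blast
  ultimately have edges: "sym_diff (tree_edges m \<union> clique_sum N m) (clique_edges S) =
      tree_edges (Suc m) \<union> sym_diff (clique_sum N m) (clique_edges S \<union> star_edges ?a S)"
    using tree_edges_Suc[of m] Suc.prems unfolding S_def by auto
  have clique_split: "clique_edges (N (Suc m)) = clique_edges S \<union> star_edges ?a S"
    unfolding N_eq by (rule clique_edges_insert) (simp add: S_def)
  have "local_comp (tree_edges m \<union> clique_sum N m) ?a = tree_edges (Suc m) \<union> clique_sum N (Suc m)"
    unfolding local_comp_eq_sym_diff nbhd_a clique_sum.simps clique_split by (rule edges)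
  then show ?case using Suc by (simp add: local_comp_seq_def)
qed

lemma local_comp_seq_tree_edges:
  "local_comp_seq (tree_edges 0) (map priv [1..<Suc n]) = clique_sum N n"
proof -
  have "tree_edges n = {}" by (simp add: tree_edges_def)
  then show ?thesis using local_comp_seq_priv[OF order_refl] by (simp only: Un_empty_left)
qed

lemma nbhd_tree_edges_Int:
  assumes "i \<in> {1..n}" "j \<in> {1..n}" "i \<noteq> j"
  shows "nbhd (tree_edges 0) (priv i) \<inter> nbhd (tree_edges 0) (priv j) = N i \<inter> N j"
  using assms nbhd_tree_edges[of 0 i] nbhd_tree_edges[of 0 j] priv_in_N_iff[of i j] priv_in_N_iff[of j i]
  by auto

lemma tree_edge_cases:
  "e \<in> tree_edges 0 \<Longrightarrow> \<exists>i\<in>{1..n}. \<exists>c\<in>N i - {priv i}. e = {priv i, c}"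
  unfolding tree_edges_def star_edges_def by fastforce

lemma N_Diff_priv_subset: "i \<in> {1..n} \<Longrightarrow> N i - {priv i} \<subseteq> clients - priv ` {1..n}"
  using N_subset_clients priv_in_N_iff by blast

lemma simple_graph_tree_edges: "simple_graph clients (tree_edges 0)"
  unfolding simple_graph_def
proof (intro conjI ballI finite_clients)
  fix e assume "e \<in> tree_edges 0"
  then obtain i c where "i \<in> {1..n}" "c \<in> N i - {priv i}" "e = {priv i, c}"
    using tree_edge_cases by blast
  then show "\<exists>a b. e = {a, b} \<and> a \<noteq> b \<and> a \<in> clients \<and> b \<in> clients"
    using N_Diff_priv_subset priv_in_clients by blast
qed

lemma card_nbhd_tree_edges: "i \<in> {1..n} \<Longrightarrow> card (nbhd (tree_edges 0) (priv i)) = k_c - 1"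
  using nbhd_tree_edges[of 0 i] card_N[of i] finite_N[of i] priv_in_N_iff[of i i] by simp

lemma gen_tree_like_tree_edges: "gen_tree_like clients (tree_edges 0) priv n (k_c - 1) kb"
proof -
  have edges: "\<forall>e\<in>tree_edges 0. \<exists>i\<in>{1..n}. \<exists>c\<in>clients - priv ` {1..n}. e = {priv i, c}"
  proof
    fix e assume "e \<in> tree_edges 0"
    then obtain i c where "i \<in> {1..n}" "c \<in> N i - {priv i}" "e = {priv i, c}"
      using tree_edge_cases by blast
    then show "\<exists>i\<in>{1..n}. \<exists>c\<in>clients - priv ` {1..n}. e = {priv i, c}"
      using N_Diff_priv_subset by blast
  qed
  have card_Int: "\<forall>i. 1 \<le> i \<and> i < n \<longrightarrow>
      card (nbhd (tree_edges 0) (priv i) \<inter> nbhd (tree_edges 0) (priv (Suc i))) = kb"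
  proof (intro allI impI)
    fix i assume "1 \<le> i \<and> i < n"
    then show "card (nbhd (tree_edges 0) (priv i) \<inter> nbhd (tree_edges 0) (priv (Suc i))) = kb"
      using nbhd_tree_edges_Int[of i "Suc i"] card_N_Int_N_Suc[of i] by simp
  qed
  have disjoint: "\<forall>i\<in>{1..n}. \<forall>j\<in>{1..n}. i + 2 \<le> j \<longrightarrow>
      nbhd (tree_edges 0) (priv i) \<inter> nbhd (tree_edges 0) (priv j) = {}"
  proof (intro ballI impI)
    fix i j assume "i \<in> {1..n}" "j \<in> {1..n}" "i + 2 \<le> j"
    then show "nbhd (tree_edges 0) (priv i) \<inter> nbhd (tree_edges 0) (priv j) = {}"
      using nbhd_tree_edges_Int[of i j] N_Int_N_eq_empty[of i j] by simp
  qed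
  have cover: "\<forall>c\<in>clients - priv ` {1..n}. \<exists>i\<in>{1..n}. c \<in> nbhd (tree_edges 0) (priv i)"
  proof
    fix c assume c: "c \<in> clients - priv ` {1..n}"
    then obtain i where i: "i \<in> {1..n}" "c \<in> N i" using client_in_some_N by blast
    then have "c \<in> nbhd (tree_edges 0) (priv i)" using c nbhd_tree_edges[of 0 i] by auto
    with i show "\<exists>i\<in>{1..n}. c \<in> nbhd (tree_edges 0) (priv i)" by blast
  qed
  have inj: "inj_on priv {1..n}"
    using priv_eq_iff by (simp add: inj_on_def)
  have range: "priv ` {1..n} \<subseteq> clients"
    using priv_in_clients by blast
  have "n \<ge> 1" "kb \<ge> 1"
    using gen_tree_like by (simp_all add: gen_tree_like_def)
  then show ?thesis unfolding gen_tree_like_def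
    by (intro conjI ballI simple_graph_tree_edges inj range edges card_nbhd_tree_edges card_Int
        disjoint cover)
qed

end

theorem lemma6:
  fixes V :: "'a set" and E :: "'a set set" and orc :: "nat \<Rightarrow> 'a"
    and n_o k_c kb :: nat
  assumes T: "gen_tree_like V E orc n_o k_c kb"
    and kc: "k_c > kbar n_o kb"
  shows "\<exists>V' E' (orc' :: nat \<Rightarrow> 'a) f.
           gen_tree_like V' E' orc' n_o (k_c - 1) kb \<and>
           bij_betw f V' (fst (enhanced_ring V E orc n_o)) \<and>
           snd (enhanced_ring V E orc n_o) =
             (\<lambda>e. f ` e) ` local_comp_seq E' (map orc' [1..<Suc n_o])"
proof -
  interpret gen_tree_like_private V E orc n_o k_c kb
    using T kc by unfold_locales
  have "gen_tree_like clients (tree_edges 0) priv n_o (k_c - 1) kb \<and>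
      bij_betw id clients (fst (enhanced_ring V E orc n_o)) \<and>
      snd (enhanced_ring V E orc n_o) =
        (\<lambda>e. id ` e) ` local_comp_seq (tree_edges 0) (map priv [1..<Suc n_o])"
    unfolding enhanced_ring_eq local_comp_seq_tree_edges fst_conv snd_conv image_id id_apply image_ident
    by (intro conjI gen_tree_like_tree_edges) (simp_all add: bij_betw_def)
  then show ?thesis by (intro exI)
qed

end
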